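(* Let $n\ge1$ and let $\mathbf{k}:\mathbb{R}^{2n}\to\mathbb{R}$ be a continuous function such that there is a continuous $\tilde{\mathbf{k}}:\mathbb{R}^n\to\mathbb{R}$ with $\mathbf{k}(x,y)=\tilde{\mathbf{k}}(x-y)$ for all $x,y\in\mathbb{R}^n$. Let $\Omega_S$ be the set of all real $2\times 2n$ matrices of the form $A=\begin{bmatrix} w & 0\\ 0 & -w\end{bmatrix}$, $w\in\mathbb{R}^n$, and \[ \mathcal{M}(\Omega_S)=\operatorname{span}\{\,z\mapsto g(Az):\ A\in\Omega_S,\ g\in C(\mathbb{R}^2,\mathbb{R})\,\},\qquad z\in\mathbb{R}^{2n}. \] Then $\mathbf{k}$ belongs to the closure of $\mathcal{M}(\Omega_S)$ in $C(\mathbb{R}^{2n},\mathbb{R})$ with the topology of uniform convergence on compact sets. In addition, if $\mathbf{k}$ is symmetric, i.e. $\mathbf{k}(x,y)=\mathbf{k}(y,x)$ for all $x,y$, then for every compact set $K\subset\mathbb{R}^{2n}$ and every $\epsilon>0$ there exist positive integers $M_1,M_2$, coefficients $c_j\in\mathbb{R}$, vectors $w_j\in\mathbb{R}^n$ ($j=1,\dots,M_1$) and numbers $t_k\in\mathbb{R}$ ($k=1,\dots,M_2$) such that for all $(x,y)\in K$ \[ \Big|\mathbf{k}(x,y)-\sum_{j=1}^{M_1}\sum_{k=1}^{M_2}\frac{c_j}{M_2}\cos(\langle w_j,x\rangle+t_k)\cos(\langle w_j,y\rangle+t_k)\Big|<\epsilon. \]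
   Context: $\langle\cdot,\cdot\rangle$ is the standard inner product on $\mathbb{R}^n$. *)

theory Defs
  imports "HOL-Analysis.Analysis"
begin

text \<open>R^{2n} is modelled as pairs (x,y) of vectors in real^'n (product topology).
  A matrix A = [w 0; 0 -w] in Omega_S acts by A (x,y) = (w\<bullet>x, -(w\<bullet>y)).\<close>

definition Omega_S_apply :: "real^'n \<Rightarrow> (real^'n) \<times> (real^'n) \<Rightarrow> real \<times> real" where
  "Omega_S_apply w z = (w \<bullet> fst z, - (w \<bullet> snd z))"

definition M_Omega_S :: "((real^'n) \<times> (real^'n) \<Rightarrow> real) set" where
  "M_Omega_S = {f. \<exists>m (c::nat \<Rightarrow> real) (w::nat \<Rightarrow> real^'n) (g::nat \<Rightarrow> real \<times> real \<Rightarrow> real).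
       (\<forall>i<m. continuous_on UNIV (g i)) \<and>
       f = (\<lambda>z. \<Sum>i<m. c i * g i (Omega_S_apply (w i) z))}"

definition in_compact_uniform_closure :: "('a::topological_space \<Rightarrow> real) set \<Rightarrow> ('a \<Rightarrow> real) \<Rightarrow> bool" where
  "in_compact_uniform_closure S k \<longleftrightarrow>
     (\<forall>K e. compact K \<and> e > 0 \<longrightarrow> (\<exists>f\<in>S. \<forall>z\<in>K. \<bar>k z - f z\<bar> < e))"

end

theory Submission
  imports Defs
begin

(* Trigonometric polynomials u \<mapsto> \<Sum> a\<^sub>i cos (w\<^sub>i \<bullet> u + s\<^sub>i) form a point-separating
   algebra containing the constants, so by Stone-Weierstrass they approximate the continuous
   function kt uniformly on the compact set {x - y | (x, y) \<in> K}.  Each term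
   cos (w \<bullet> (x - y) + s) is g (w \<bullet> x, - (w \<bullet> y)) with g (p, q) = cos (p + q + s), which gives
   the first claim.  If k is symmetric then kt is even, and averaging the approximations at
   u and -u removes the phases, leaving \<Sum> b\<^sub>i cos (w\<^sub>i \<bullet> u).  Finally
   cos (p - q) = cos p cos q + cos (p + pi/2) cos (q + pi/2), so the two phases 0 and pi/2
   (M2 = 2) turn this into the required sum of products. *)

inductive_set trig_poly :: "('a::real_inner \<Rightarrow> real) set" where
  zero: "(\<lambda>u. 0) \<in> trig_poly"
| add_cos: "f \<in> trig_poly \<Longrightarrow> (\<lambda>u. f u + a * cos (w \<bullet> u + s)) \<in> trig_poly"

lemma trig_poly_cos: "(\<lambda>u. a * cos (w \<bullet> u + s)) \<in> trig_poly"
  using trig_poly.add_cos[OF trig_poly.zero] by simp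

lemma trig_poly_const: "(\<lambda>u. c) \<in> trig_poly"
  using trig_poly_cos[of c 0 0] by simp

lemma trig_poly_add:
  assumes "f \<in> trig_poly" "g \<in> trig_poly"
  shows "(\<lambda>u. f u + g u) \<in> trig_poly"
  using assms(2)
proof induction
  case zero
  show ?case using assms(1) by simp
next
  case (add_cos g a w s)
  from trig_poly.add_cos[OF add_cos.IH, of a w s] show ?case
    by (simp add: add.assoc)
qed

lemma trig_poly_scale: "f \<in> trig_poly \<Longrightarrow> (\<lambda>u. c * f u) \<in> trig_poly"
proof (induction rule: trig_poly.induct)
  case zero
  show ?case by (simp add: trig_poly.zero)
next
  case (add_cos f a w s)
  from trig_poly.add_cos[OF add_cos.IH, of "c * a" w s] show ?case
    by (simp add: distrib_left mult.assoc)
qed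

lemma trig_poly_cos_mult:
  "f \<in> trig_poly \<Longrightarrow> (\<lambda>u. cos (v \<bullet> u + t) * f u) \<in> trig_poly"
proof (induction rule: trig_poly.induct)
  case zero
  show ?case by (simp add: trig_poly.zero)
next
  case (add_cos f a w s)
  have "cos (v \<bullet> u + t) * (a * cos (w \<bullet> u + s)) =
      a / 2 * cos ((v + w) \<bullet> u + (t + s)) + a / 2 * cos ((v - w) \<bullet> u + (t - s))" for u
  proof -
    have "(v + w) \<bullet> u + (t + s) = (v \<bullet> u + t) + (w \<bullet> u + s)"
      and "(v - w) \<bullet> u + (t - s) = (v \<bullet> u + t) - (w \<bullet> u + s)"
      by (simp_all add: inner_add_left inner_diff_left)
    moreover have "cos X * (a * cos Y) = a / 2 * cos (X + Y) + a / 2 * cos (X - Y)" for X Y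
      by (simp add: cos_times_cos field_simps)
    ultimately show ?thesis
      by (simp only:)
  qed
  then have "(\<lambda>u. cos (v \<bullet> u + t) * (f u + a * cos (w \<bullet> u + s))) =
      (\<lambda>u. (cos (v \<bullet> u + t) * f u + a / 2 * cos ((v + w) \<bullet> u + (t + s)))
             + a / 2 * cos ((v - w) \<bullet> u + (t - s)))"
    by (simp add: distrib_left add.assoc)
  then show ?case
    by (simp only:) (intro trig_poly.add_cos add_cos.IH)
qed

lemma trig_poly_mult:
  assumes "f \<in> trig_poly" "g \<in> trig_poly"
  shows "(\<lambda>u. f u * g u) \<in> trig_poly"
  using assms(1)
proof induction
  case zero
  show ?case by (simp add: trig_poly.zero)
next
  case (add_cos f a w s)
  have "(\<lambda>u. a * (cos (w \<bullet> u + s) * g u)) \<in> trig_poly"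
    by (intro trig_poly_scale trig_poly_cos_mult assms(2))
  from trig_poly_add[OF add_cos.IH this] show ?case
    by (simp add: distrib_right mult.assoc)
qed

lemma trig_poly_continuous: "f \<in> trig_poly \<Longrightarrow> continuous_on S f"
  by (induction rule: trig_poly.induct) (auto intro!: continuous_intros)

lemma trig_poly_separates_points:
  fixes x y :: "'a::real_inner"
  assumes "x \<noteq> y"
  shows "\<exists>f\<in>trig_poly. f x \<noteq> f y"
proof -
  define d where "d = x - y"
  have "d \<bullet> d > 0" using assms by (simp add: d_def)
  define w where "w = (pi / (2 * (d \<bullet> d))) *\<^sub>R d"
  have "w \<bullet> x - w \<bullet> y = w \<bullet> d"
    by (simp add: d_def inner_diff_right)
  also have "\<dots> = pi / (2 * (d \<bullet> d)) * (d \<bullet> d)"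
    by (simp add: w_def)
  also have "\<dots> = pi / 2"
    using \<open>d \<bullet> d > 0\<close> by simp
  finally have "w \<bullet> x - w \<bullet> y = pi / 2" .
  then have "cos (w \<bullet> x + - (w \<bullet> y)) = 0"
    by (metis cos_pi_half diff_conv_add_uminus)
  then have "cos (w \<bullet> x + - (w \<bullet> y)) \<noteq> cos (w \<bullet> y + - (w \<bullet> y))"
    by simp
  then show ?thesis
    using trig_poly_cos[of 1 w "- (w \<bullet> y)"] by (metis mult_1)
qed

(* m > 0 (the zero polynomial being 0 * cos 0) because the theorem asks for M1 > 0. *)
lemma trig_poly_eq_cos_sum:
  "f \<in> trig_poly \<Longrightarrow> \<exists>m::nat>0. \<exists>a w s. f = (\<lambda>u. \<Sum>i<m. a i * cos (w i \<bullet> u + s i))"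
proof (induction rule: trig_poly.induct)
  case zero
  show ?case
    by (rule exI[of _ 1]) (auto intro: exI[of _ "\<lambda>_. 0 :: real"])
next
  case (add_cos f a0 w0 s0)
  then obtain m :: nat and a w s where "f = (\<lambda>u. \<Sum>i<m. a i * cos (w i \<bullet> u + s i))"
    by blast
  then have "(\<lambda>u. f u + a0 * cos (w0 \<bullet> u + s0)) =
      (\<lambda>u. \<Sum>i<Suc m. (a(m := a0)) i * cos ((w(m := w0)) i \<bullet> u + (s(m := s0)) i))"
    by simp
  then show ?case
    by blast
qed

lemma cos_sum_approx:
  fixes f :: "'a::real_inner \<Rightarrow> real"
  assumes "continuous_on D f" "compact D" "e > 0"
  obtains m :: nat and a w s where "m > 0" "\<forall>u\<in>D. \<bar>f u - (\<Sum>i<m. a i * cos (w i \<bullet> u + s i))\<bar> < e"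
proof -
  interpret function_ring_on trig_poly D
    using assms(2)
    by unfold_locales
      (auto intro: trig_poly_continuous trig_poly_add trig_poly_mult trig_poly_const
        trig_poly_separates_points)
  obtain g where "g \<in> trig_poly" "\<forall>u\<in>D. \<bar>f u - g u\<bar> < e"
    using Stone_Weierstrass_basic[OF assms(1,3)] by blast
  then show ?thesis
    using trig_poly_eq_cos_sum that by blast
qed

lemma even_cos_sum_approx:
  fixes f :: "'a::real_inner \<Rightarrow> real"
  assumes "continuous_on UNIV f" "\<And>u. f (- u) = f u" "compact D" "e > 0"
  obtains m :: nat and b w where "m > 0" "\<forall>u\<in>D. \<bar>f u - (\<Sum>i<m. b i * cos (w i \<bullet> u))\<bar> < e"
proof -
  have "compact (D \<union> uminus ` D)"
    using assms(3) by (intro compact_Un compact_continuous_image continuous_intros) auto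
  then obtain m :: nat and a w s where "m > 0" and approx:
      "\<forall>u\<in>D \<union> uminus ` D. \<bar>f u - (\<Sum>i<m. a i * cos (w i \<bullet> u + s i))\<bar> < e"
    by (rule cos_sum_approx[OF continuous_on_subset[OF assms(1) subset_UNIV] _ assms(4)])
  have "\<bar>f u - (\<Sum>i<m. a i * cos (s i) * cos (w i \<bullet> u))\<bar> < e" if "u \<in> D" for u
  proof -
    have "\<bar>f u - (\<Sum>i<m. a i * cos (w i \<bullet> u + s i))\<bar> < e"
      using approx that by blast
    moreover have "\<bar>f (- u) - (\<Sum>i<m. a i * cos (w i \<bullet> (- u) + s i))\<bar> < e"
      using approx that by blast
    moreover have "(\<Sum>i<m. a i * cos (s i) * cos (w i \<bullet> u)) =
        ((\<Sum>i<m. a i * cos (w i \<bullet> u + s i)) + (\<Sum>i<m. a i * cos (w i \<bullet> (- u) + s i))) / 2"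
      unfolding sum.distrib[symmetric] sum_divide_distrib
      by (rule sum.cong) (simp_all add: cos_add cos_diff algebra_simps)
    ultimately show ?thesis
      unfolding assms(2) by (simp add: abs_less_iff)
  qed
  then show ?thesis
    using that[OF \<open>m > 0\<close>, of "\<lambda>i. a i * cos (s i)" w] by blast
qed

lemma cos_ridge_sum_in_M_Omega_S:
  "(\<lambda>z. \<Sum>i<(m::nat). a i * cos (w i \<bullet> (fst z - snd z) + s i)) \<in> M_Omega_S"
proof -
  define g where "g i p = cos (fst p + snd p + s i)" for i and p :: "real \<times> real"
  have "\<forall>i<m. continuous_on UNIV (g i)"
    unfolding g_def by (intro allI impI continuous_intros)
  moreover have "g i (Omega_S_apply (w i) z) = cos (w i \<bullet> (fst z - snd z) + s i)" for i z
    by (simp add: g_def Omega_S_apply_def inner_diff_right)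
  ultimately show ?thesis
    unfolding M_Omega_S_def by (intro CollectI exI[of _ m] exI[of _ a] exI[of _ w] exI[of _ g]) simp
qed

lemma difference_kernel_in_closure:
  fixes kt :: "real^'n \<Rightarrow> real"
  assumes "continuous_on UNIV kt"
  shows "in_compact_uniform_closure M_Omega_S (\<lambda>(x, y). kt (x - y))"
  unfolding in_compact_uniform_closure_def
proof (intro allI impI, elim conjE)
  fix K :: "((real^'n) \<times> (real^'n)) set" and e :: real
  assume "compact K" "e > 0"
  then have "compact ((\<lambda>z. fst z - snd z) ` K)"
    by (intro compact_continuous_image continuous_intros)
  then obtain m :: nat and a w s where
    "\<forall>u\<in>(\<lambda>z. fst z - snd z) ` K. \<bar>kt u - (\<Sum>i<m. a i * cos (w i \<bullet> u + s i))\<bar> < e"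
    by (rule cos_sum_approx[OF continuous_on_subset[OF assms subset_UNIV] _ \<open>e > 0\<close>]) blast+
  then show "\<exists>f\<in>M_Omega_S. \<forall>z\<in>K. \<bar>(\<lambda>(x, y). kt (x - y)) z - f z\<bar> < e"
    using cos_ridge_sum_in_M_Omega_S[of a w s m] by (auto simp: case_prod_beta)
qed

lemma cos_diff_eq_phase_sum: "cos (a - b) = cos a * cos b + cos (a + pi / 2) * cos (b + pi / 2)"
  by (simp add: cos_diff cos_add)

lemma even_difference_kernel_cos_product_approx:
  fixes kt :: "'a::real_inner \<Rightarrow> real"
  assumes "continuous_on UNIV kt" "\<And>u. kt (- u) = kt u" "compact K" "e > 0"
  shows "\<exists>(M1::nat) (M2::nat) (c::nat \<Rightarrow> real) (w::nat \<Rightarrow> 'a) (t::nat \<Rightarrow> real).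
           M1 > 0 \<and> M2 > 0 \<and>
           (\<forall>(x, y)\<in>K. \<bar>kt (x - y) - (\<Sum>j=1..M1. \<Sum>l=1..M2.
               c j / real M2 * cos (w j \<bullet> x + t l) * cos (w j \<bullet> y + t l))\<bar> < e)"
proof -
  have "compact ((\<lambda>z. fst z - snd z) ` K)"
    using assms(3) by (intro compact_continuous_image continuous_intros)
  then obtain m :: nat and b w where "m > 0" and approx:
      "\<forall>u\<in>(\<lambda>z. fst z - snd z) ` K. \<bar>kt u - (\<Sum>i<m. b i * cos (w i \<bullet> u))\<bar> < e"
    by (rule even_cos_sum_approx[OF assms(1,2) _ assms(4)])
  define t :: "nat \<Rightarrow> real" where "t l = (if l = 1 then 0 else pi / 2)" for l
  have phase_sum: "(\<Sum>l=1..2. cos (p + t l) * cos (q + t l)) = cos (p - q)" for p q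
    by (simp add: t_def numeral_2_eq_2 cos_diff_eq_phase_sum)
  have features: "(\<Sum>j=1..m. \<Sum>l=1..2.
        2 * b (j - 1) / real 2 * cos (w (j - 1) \<bullet> x + t l) * cos (w (j - 1) \<bullet> y + t l))
      = (\<Sum>i<m. b i * cos (w i \<bullet> (x - y)))" for x y
    by (simp add: sum.atLeast1_atMost_eq[where n=m] mult.assoc phase_sum[unfolded One_nat_def]
        inner_diff_right flip: sum_distrib_left)
  have close: "\<forall>(x, y)\<in>K. \<bar>kt (x - y) - (\<Sum>i<m. b i * cos (w i \<bullet> (x - y)))\<bar> < e"
    using approx by fastforce
  show ?thesis
    by (rule exI[of _ m], rule exI[of _ 2], rule exI[of _ "\<lambda>j. 2 * b (j - 1)"],
        rule exI[of _ "\<lambda>j. w (j - 1)"], rule exI[of _ t])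
      (unfold features, use close \<open>m > 0\<close> in simp)
qed

theorem theorem5p1:
  fixes k :: "(real^'n) \<times> (real^'n) \<Rightarrow> real"
  assumes k_cont: "continuous_on UNIV k"
    and k_shift: "\<exists>kt :: real^'n \<Rightarrow> real. continuous_on UNIV kt \<and>
                    (\<forall>x y. k (x, y) = kt (x - y))"
  shows "in_compact_uniform_closure M_Omega_S k \<and>
    ((\<forall>x y. k (x, y) = k (y, x)) \<longrightarrow>
      (\<forall>K e. compact K \<and> e > 0 \<longrightarrow>
        (\<exists>(M1::nat) (M2::nat) (c::nat \<Rightarrow> real) (w::nat \<Rightarrow> real^'n) (t::nat \<Rightarrow> real).
           M1 > 0 \<and> M2 > 0 \<and>
           (\<forall>(x, y)\<in>K. \<bar>k (x, y) - (\<Sum>j=1..M1. \<Sum>l=1..M2.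
               c j / real M2 * cos (w j \<bullet> x + t l) * cos (w j \<bullet> y + t l))\<bar> < e))))"
proof -
  obtain kt :: "real^'n \<Rightarrow> real" where kt_cont: "continuous_on UNIV kt"
    and k_eq: "\<And>x y. k (x, y) = kt (x - y)"
    using k_shift by blast
  have k_fun: "k = (\<lambda>(x, y). kt (x - y))"
    by (auto simp: k_eq)
  have kt_even: "kt (- u) = kt u" if "\<forall>x y. k (x, y) = k (y, x)" for u
    using that k_eq[of 0 u] k_eq[of u 0] by simp
  show ?thesis
    using difference_kernel_in_closure[OF kt_cont]
      even_difference_kernel_cos_product_approx[OF kt_cont kt_even]
    by (simp add: k_fun)
qed

end
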